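(* Let $n\ge 2$. For each measurable function $f:\mathbb{R}\to\mathbb{R}$ and each real number $x$, the following are equivalent: (a) the ordinary derivative $f'(x)=\lim_{h\to0}\frac{f(x+h)-f(x)}{h}$ exists, and for every $k=2,\dots,n$ and every $j=0,1,\dots,k-2$ the limit $$D_{k,j}f(x)=\lim_{h\to0}h^{-k}\sum_{i=0}^k(-1)^i\binom ki f\big(x+(k+j-i)h\big)$$ exists (finite); (b) the Peano derivative $f_{(n)}(x)$ exists. *)

theory Defs
  imports "HOL-Analysis.Analysis"
begin

definition peano_differentiable :: "nat \<Rightarrow> (real \<Rightarrow> real) \<Rightarrow> real \<Rightarrow> bool" where
  "peano_differentiable n f x \<longleftrightarrow>
     (\<exists>a::nat \<Rightarrow> real. a 0 = f x \<and>
        ((\<lambda>h. (f (x + h) - (\<Sum>i\<le>n. a i * h ^ i / fact i)) / h ^ n) \<longlongrightarrow> 0) (at 0))"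

definition diff_quot :: "nat \<Rightarrow> nat \<Rightarrow> (real \<Rightarrow> real) \<Rightarrow> real \<Rightarrow> real \<Rightarrow> real" where
  "diff_quot k j f x h =
     (\<Sum>i\<le>k. (-1) ^ i * real (k choose i) * f (x + (real k + real j - real i) * h)) / h ^ k"

definition D_exists :: "nat \<Rightarrow> nat \<Rightarrow> (real \<Rightarrow> real) \<Rightarrow> real \<Rightarrow> bool" where
  "D_exists k j f x \<longleftrightarrow> (\<exists>L. (diff_quot k j f x \<longlongrightarrow> L) (at 0))"

end

theory Submission
  imports Defs
begin

text \<open>
  One direction is Taylor's formula: the \<open>k\<close>-th forward difference annihilates polynomials of
  degree \<open>< k\<close>, so a Peano expansion of order \<open>n \<ge> k\<close> makes every quotient \<open>D\<^sub>k\<^sub>,\<^sub>j f(x)\<close>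
  converge.

  Conversely one climbs from order \<open>1\<close> (which is ordinary differentiability) one order at a time.
  If the Peano expansion of order \<open>n\<close> exists with remainder \<open>r = o(h\<^sup>n)\<close>, the existence of
  \<open>D\<^sub>n\<^sub>+\<^sub>1\<^sub>,\<^sub>j f(x)\<close> for \<open>j < n\<close> says that the \<open>(n+1)\<close>-st differences of \<open>r\<close> with step \<open>h\<close> are
  \<open>C h\<^sup>n\<^sup>+\<^sup>1 + o(h\<^sup>n\<^sup>+\<^sup>1)\<close>. A difference of order \<open>K\<close> with step \<open>2h\<close> is a binomial combination of
  differences of order \<open>K\<close> with step \<open>h\<close>, and a dilation argument (if \<open>g = o(h\<^sup>n)\<close> and
  \<open>g(2h) - b g(h) = C h\<^sup>n\<^sup>+\<^sup>1 + o(h\<^sup>n\<^sup>+\<^sup>1)\<close> with \<open>|b| \<le> 2\<^sup>n\<close>, then \<open>g(h) / h\<^sup>n\<^sup>+\<^sup>1\<close> converges)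
  lowers the order of the differences one by one, down to \<open>r\<close> itself.
\<close>

section \<open>Forward differences\<close>

definition fwd_diff :: "nat \<Rightarrow> (nat \<Rightarrow> real) \<Rightarrow> nat \<Rightarrow> real" where
  "fwd_diff K v j = (\<Sum>i\<le>K. (-1) ^ (K - i) * real (K choose i) * v (j + i))"

lemma sum_binomial_Suc_split:
  "(\<Sum>l\<le>Suc K. real (Suc K choose l) * z l) =
   (\<Sum>l\<le>K. real (K choose l) * z l) + (\<Sum>l\<le>K. real (K choose l) * z (Suc l))"
proof -
  have "(\<Sum>l\<le>Suc K. real (Suc K choose l) * z l) =
      z 0 + (\<Sum>l\<le>K. real (K choose Suc l) * z (Suc l)) + (\<Sum>l\<le>K. real (K choose l) * z (Suc l))"
    by (simp only: sum.atMost_Suc_shift binomial_Suc_Suc of_nat_add distrib_right sum.distrib) simp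
  also have "z 0 + (\<Sum>l\<le>K. real (K choose Suc l) * z (Suc l)) = (\<Sum>l\<le>Suc K. real (K choose l) * z l)"
    by (subst sum.atMost_Suc_shift) simp
  also have "\<dots> = (\<Sum>l\<le>K. real (K choose l) * z l)"
    by simp
  finally show ?thesis .
qed

lemma fwd_diff_Suc: "fwd_diff (Suc K) v j = fwd_diff K v (Suc j) - fwd_diff K v j"
proof -
  have "fwd_diff (Suc K) v j = (\<Sum>l\<le>K. real (K choose l) * ((-1) ^ (Suc K - l) * v (j + l)))
      + (\<Sum>l\<le>K. real (K choose l) * ((-1) ^ (Suc K - Suc l) * v (j + Suc l)))"
    unfolding fwd_diff_def using sum_binomial_Suc_split[of K "\<lambda>l. (-1) ^ (Suc K - l) * v (j + l)"]
    by (simp add: algebra_simps)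
  also have "(\<Sum>l\<le>K. real (K choose l) * ((-1) ^ (Suc K - l) * v (j + l))) = - fwd_diff K v j"
    unfolding fwd_diff_def sum_negf[symmetric] by (rule sum.cong) (auto simp: Suc_diff_le)
  also have "(\<Sum>l\<le>K. real (K choose l) * ((-1) ^ (Suc K - Suc l) * v (j + Suc l))) = fwd_diff K v (Suc j)"
    unfolding fwd_diff_def by (rule sum.cong) auto
  finally show ?thesis by simp
qed

lemma fwd_diff_const: "fwd_diff (Suc K) (\<lambda>_. c) j = 0"
  unfolding fwd_diff_Suc by (simp add: fwd_diff_def)

lemma fwd_diff_shift: "fwd_diff K v j = fwd_diff K (\<lambda>m. v (j + m)) 0"
  by (simp add: fwd_diff_def)

lemma fwd_diff_add: "fwd_diff K (\<lambda>m. v m + w m) j = fwd_diff K v j + fwd_diff K w j"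
  unfolding fwd_diff_def by (simp add: sum.distrib algebra_simps)

lemma fwd_diff_sum: "fwd_diff K (\<lambda>m. \<Sum>d\<in>D. v d m) j = (\<Sum>d\<in>D. fwd_diff K (v d) j)"
  unfolding fwd_diff_def by (simp add: sum_distrib_left sum.swap[of _ D])

lemma fwd_diff_cmult: "fwd_diff K (\<lambda>m. c * v m) j = c * fwd_diff K v j"
  unfolding fwd_diff_def by (simp add: sum_distrib_left algebra_simps)

text \<open>The absorption identity \<open>i * (Suc e choose i) = Suc e * (e choose (i - 1))\<close> lowers the degree.\<close>
lemma fwd_diff_shifted_power_Suc:
  "fwd_diff (Suc e) (\<lambda>m. (t + real m) ^ Suc k) 0 =
     t * fwd_diff (Suc e) (\<lambda>m. (t + real m) ^ k) 0 + real (Suc e) * fwd_diff e (\<lambda>m. (t + 1 + real m) ^ k) 0"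
proof -
  have split: "(-1) ^ (Suc e - i) * real (Suc e choose i) * (t + real (0 + i)) ^ Suc k =
     t * ((-1) ^ (Suc e - i) * real (Suc e choose i) * (t + real (0 + i)) ^ k) +
     (-1) ^ (Suc e - i) * real (Suc e choose i) * (real i * (t + real i) ^ k)" for i
    by (simp only: power_Suc) (simp add: algebra_simps)
  have "fwd_diff (Suc e) (\<lambda>m. (t + real m) ^ Suc k) 0 =
      t * fwd_diff (Suc e) (\<lambda>m. (t + real m) ^ k) 0 +
      (\<Sum>i\<le>Suc e. (-1) ^ (Suc e - i) * real (Suc e choose i) * (real i * (t + real i) ^ k))"
    unfolding fwd_diff_def split sum.distrib sum_distrib_left by simp
  also have "(\<Sum>i\<le>Suc e. (-1) ^ (Suc e - i) * real (Suc e choose i) * (real i * (t + real i) ^ k))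
     = (\<Sum>i\<le>e. (-1) ^ (e - i) * (real (Suc e choose Suc i) * real (Suc i)) * (t + 1 + real i) ^ k)"
    by (subst sum.atMost_Suc_shift) (simp add: algebra_simps)
  also have "\<dots> = real (Suc e) * fwd_diff e (\<lambda>m. (t + 1 + real m) ^ k) 0"
    unfolding fwd_diff_def sum_distrib_left
  proof (rule sum.cong)
    fix i
    have "real (Suc e choose Suc i) * real (Suc i) = real (Suc e) * real (e choose i)"
      using binomial_absorption[of i "Suc e"] by (metis of_nat_mult mult.commute diff_Suc_1)
    then show "(-1) ^ (e - i) * (real (Suc e choose Suc i) * real (Suc i)) * (t + 1 + real i) ^ k
      = real (Suc e) * ((-1) ^ (e - i) * real (e choose i) * (t + 1 + real (0 + i)) ^ k)"
      by simp
  qed simp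
  finally show ?thesis .
qed

lemma fwd_diff_shifted_power_eq_0: "k < e \<Longrightarrow> fwd_diff e (\<lambda>m. (t + real m) ^ k) 0 = 0"
proof (induction k arbitrary: e t)
  case 0
  then obtain e' where "e = Suc e'" by (cases e) auto
  then show ?case using fwd_diff_const[of e' 1 0] by simp
next
  case (Suc k)
  then obtain e' where e: "e = Suc e'" by (cases e) auto
  show ?case unfolding e fwd_diff_shifted_power_Suc using Suc e by simp
qed

lemma fwd_diff_power_eq_0: "k < K \<Longrightarrow> fwd_diff K (\<lambda>m. real m ^ k) j = 0"
  using fwd_diff_shifted_power_eq_0[of k K "real j"] by (simp add: fwd_diff_shift[of _ _ j] add.commute)

lemma fwd_diff_scaled_poly:
  "fwd_diff K (\<lambda>m. \<Sum>i\<le>n. a i * (real m * h) ^ i / fact i) j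
     = (\<Sum>i\<le>n. a i * h ^ i / fact i * fwd_diff K (\<lambda>m. real m ^ i) j)"
proof -
  have "fwd_diff K (\<lambda>m. \<Sum>i\<le>n. a i * (real m * h) ^ i / fact i) j
      = fwd_diff K (\<lambda>m. \<Sum>i\<le>n. a i * h ^ i / fact i * real m ^ i) j"
    by (simp add: power_mult_distrib algebra_simps)
  then show ?thesis by (simp only: fwd_diff_sum fwd_diff_cmult)
qed

text \<open>For the shift operator \<open>E\<close>: \<open>(E\<^sup>2 - 1)\<^sup>K = (E + 1)\<^sup>K (E - 1)\<^sup>K\<close>.\<close>
lemma fwd_diff_double_step: "fwd_diff K (\<lambda>i. v (2 * i)) 0 = (\<Sum>l\<le>K. real (K choose l) * fwd_diff K v l)"
proof (induction K arbitrary: v)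
  case 0
  then show ?case by (simp add: fwd_diff_def)
next
  case (Suc K)
  define g where "g = fwd_diff K v"
  have shifted: "fwd_diff K (\<lambda>i. v (2 * i)) 1 = (\<Sum>l\<le>K. real (K choose l) * g (Suc (Suc l)))"
  proof -
    have "fwd_diff K (\<lambda>i. v (2 * i)) 1 = fwd_diff K (\<lambda>i. v (2 * i + 2)) 0"
      by (simp add: fwd_diff_def)
    also have "\<dots> = (\<Sum>l\<le>K. real (K choose l) * fwd_diff K (\<lambda>m. v (m + 2)) l)"
      using Suc.IH[of "\<lambda>m. v (m + 2)"] by simp
    finally show ?thesis
      by (simp add: g_def fwd_diff_def add.commute add.left_commute)
  qed
  have "fwd_diff (Suc K) (\<lambda>i. v (2 * i)) 0 = (\<Sum>l\<le>K. real (K choose l) * (g (Suc (Suc l)) - g l))"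
    unfolding fwd_diff_Suc One_nat_def[symmetric] shifted Suc.IH[of v] g_def
    by (simp only: sum_subtractf right_diff_distrib)
  also have "\<dots> = (\<Sum>l\<le>K. real (K choose l) * ((g (Suc l) - g l) + (g (Suc (Suc l)) - g (Suc l))))"
    by simp
  also have "\<dots> = (\<Sum>l\<le>Suc K. real (Suc K choose l) * (g (Suc l) - g l))"
    unfolding sum_binomial_Suc_split[of K "\<lambda>l. g (Suc l) - g l"]
    by (simp only: distrib_left sum.distrib)
  also have "\<dots> = (\<Sum>l\<le>Suc K. real (Suc K choose l) * fwd_diff (Suc K) v l)"
    unfolding fwd_diff_Suc g_def ..
  finally show ?case .
qed

lemma diff_quot_eq_fwd_diff: "diff_quot k j f x h = fwd_diff k (\<lambda>m. f (x + real m * h)) j / h ^ k"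
proof -
  have "(\<Sum>i\<le>k. (-1) ^ i * real (k choose i) * f (x + (real k + real j - real i) * h))
     = (\<Sum>i\<le>k. (-1) ^ (k - i) * real (k choose (k - i)) * f (x + (real k + real j - real (k - i)) * h))"
    by (rule sum.reindex_bij_witness[where i="\<lambda>i. k - i" and j="\<lambda>i. k - i"]) auto
  also have "\<dots> = fwd_diff k (\<lambda>m. f (x + real m * h)) j"
    unfolding fwd_diff_def
  proof (rule sum.cong)
    fix i assume "i \<in> {..k}"
    then have i: "i \<le> k" by simp
    then have "real k + real j - real (k - i) = real (j + i)" by (simp add: of_nat_diff)
    then show "(-1) ^ (k - i) * real (k choose (k - i)) * f (x + (real k + real j - real (k - i)) * h)
        = (-1) ^ (k - i) * real (k choose i) * f (x + real (j + i) * h)"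
      by (simp add: binomial_symmetric[OF i, symmetric])
  qed simp
  finally show ?thesis unfolding diff_quot_def by simp
qed

section \<open>Little-o and convergence at zero\<close>

definition o_pow :: "nat \<Rightarrow> (real \<Rightarrow> real) \<Rightarrow> bool" where
  "o_pow m g \<longleftrightarrow> ((\<lambda>h. g h / h ^ m) \<longlongrightarrow> 0) (at 0)"

definition conv_pow :: "nat \<Rightarrow> (real \<Rightarrow> real) \<Rightarrow> bool" where
  "conv_pow m g \<longleftrightarrow> (\<exists>L. ((\<lambda>h. g h / h ^ m) \<longlongrightarrow> L) (at 0))"

lemma tendsto_at0_transform:
  assumes "(f \<longlongrightarrow> L) (at 0)" "\<And>h::real. h \<noteq> 0 \<Longrightarrow> f h = g h"
  shows "(g \<longlongrightarrow> L) (at 0)"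
  using assms LIM_equal[of 0 f g L] by blast

lemma o_pow_iff_bound:
  "o_pow m g \<longleftrightarrow> (\<forall>\<epsilon>>0. \<exists>\<delta>>0. \<forall>t. t \<noteq> 0 \<longrightarrow> \<bar>t\<bar> < \<delta> \<longrightarrow> \<bar>g t\<bar> \<le> \<epsilon> * \<bar>t\<bar> ^ m)"
proof -
  have quot: "\<bar>g t / t ^ m\<bar> < \<epsilon> \<longleftrightarrow> \<bar>g t\<bar> < \<epsilon> * \<bar>t\<bar> ^ m"
    if "t \<noteq> 0" for t \<epsilon>
    using that by (simp add: abs_divide power_abs divide_less_eq)
  show ?thesis
    unfolding o_pow_def LIM_eq real_norm_def diff_zero
  proof (intro iffI allI impI)
    fix \<epsilon> :: real
    assume "\<forall>r>0. \<exists>s>0. \<forall>t. t \<noteq> 0 \<and> \<bar>t\<bar> < s \<longrightarrow> \<bar>g t / t ^ m\<bar> < r" "\<epsilon> > 0"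
    then obtain \<delta> where "\<delta> > 0" and bound: "\<And>t. t \<noteq> 0 \<Longrightarrow> \<bar>t\<bar> < \<delta> \<Longrightarrow> \<bar>g t / t ^ m\<bar> < \<epsilon>"
      by blast
    have "\<bar>g t\<bar> \<le> \<epsilon> * \<bar>t\<bar> ^ m" if "t \<noteq> 0" "\<bar>t\<bar> < \<delta>" for t
      using bound[OF that] quot[OF that(1)] by (blast intro: less_imp_le)
    then show "\<exists>\<delta>>0. \<forall>t. t \<noteq> 0 \<longrightarrow> \<bar>t\<bar> < \<delta> \<longrightarrow> \<bar>g t\<bar> \<le> \<epsilon> * \<bar>t\<bar> ^ m"
      using \<open>\<delta> > 0\<close> by blast
  next
    fix \<epsilon> :: real
    assume "\<forall>\<epsilon>>0. \<exists>\<delta>>0. \<forall>t. t \<noteq> 0 \<longrightarrow> \<bar>t\<bar> < \<delta> \<longrightarrow> \<bar>g t\<bar> \<le> \<epsilon> * \<bar>t\<bar> ^ m" "\<epsilon> > 0"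
    then obtain \<delta> where "\<delta> > 0" and bound: "\<And>t. t \<noteq> 0 \<Longrightarrow> \<bar>t\<bar> < \<delta> \<Longrightarrow> \<bar>g t\<bar> \<le> \<epsilon> / 2 * \<bar>t\<bar> ^ m"
      using half_gt_zero by blast
    have "\<bar>g t\<bar> < \<epsilon> * \<bar>t\<bar> ^ m" if "t \<noteq> 0" "\<bar>t\<bar> < \<delta>" for t
    proof -
      have "\<epsilon> / 2 * \<bar>t\<bar> ^ m < \<epsilon> * \<bar>t\<bar> ^ m"
        using \<open>\<epsilon> > 0\<close> \<open>t \<noteq> 0\<close> by simp
      then show ?thesis using bound[OF that] by linarith
    qed
    then show "\<exists>\<delta>>0. \<forall>t. t \<noteq> 0 \<and> \<bar>t\<bar> < \<delta> \<longrightarrow> \<bar>g t / t ^ m\<bar> < \<epsilon>"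
      using quot \<open>\<delta> > 0\<close> by blast
  qed
qed

lemma o_pow_add: "o_pow m f \<Longrightarrow> o_pow m g \<Longrightarrow> o_pow m (\<lambda>h. f h + g h)"
  unfolding o_pow_def by (simp add: add_divide_distrib tendsto_add[where a=0 and b=0, simplified])

lemma o_pow_diff: "o_pow m f \<Longrightarrow> o_pow m g \<Longrightarrow> o_pow m (\<lambda>h. f h - g h)"
  unfolding o_pow_def by (simp add: diff_divide_distrib tendsto_diff[where a=0 and b=0, simplified])

lemma o_pow_cmult: "o_pow m f \<Longrightarrow> o_pow m (\<lambda>h. c * f h)"
  unfolding o_pow_def using tendsto_mult_right_zero[of "\<lambda>h. f h / h ^ m" "at 0" c]
  by (simp add: mult.assoc)

lemma o_pow_sum: "(\<And>i. i \<in> I \<Longrightarrow> o_pow m (f i)) \<Longrightarrow> o_pow m (\<lambda>h. \<Sum>i\<in>I. f i h)"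
proof (induction I rule: infinite_finite_induct)
  case (insert x F)
  then show ?case by (simp add: o_pow_add)
qed (simp_all add: o_pow_def)

lemma o_pow_power: "k < i \<Longrightarrow> o_pow k (\<lambda>h. c * h ^ i)"
  unfolding o_pow_def
  by (subst LIM_cong[where g="\<lambda>h. c * h ^ (i - k)"]) (auto simp: power_diff intro!: tendsto_eq_intros)

lemma o_pow_mono:
  assumes "o_pow n g" "k \<le> n"
  shows "o_pow k g"
  unfolding o_pow_def
proof (rule tendsto_at0_transform)
  have "((\<lambda>h. (g h / h ^ n) * h ^ (n - k)) \<longlongrightarrow> 0 * 0 ^ (n - k)) (at 0)"
    using assms(1) unfolding o_pow_def by (intro tendsto_intros)
  then show "((\<lambda>h. (g h / h ^ n) * h ^ (n - k)) \<longlongrightarrow> 0) (at 0)"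
    by (simp only: mult_zero_left)
  show "(g h / h ^ n) * h ^ (n - k) = g h / h ^ k" if "h \<noteq> 0" for h :: real
    using that assms(2) by (simp add: power_diff)
qed

lemma o_pow_dilate:
  assumes "o_pow m g" "g 0 = 0"
  shows "o_pow m (\<lambda>h. g (c * h))"
proof (cases "c = 0")
  case True
  with assms show ?thesis by (simp add: o_pow_def)
next
  case False
  have lim: "filterlim (\<lambda>h::real. c * h) (at 0) (at 0)"
  proof (rule filterlim_atI)
    show "((\<lambda>h::real. c * h) \<longlongrightarrow> 0) (at 0)"
      by (rule tendsto_eq_intros) (auto intro: tendsto_ident_at)
    show "eventually (\<lambda>h::real. c * h \<noteq> 0) (at 0)"
      using False by (simp add: eventually_at_filter)
  qed
  then have "((\<lambda>h. g (c * h) / (c * h) ^ m) \<longlongrightarrow> 0) (at 0)"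
    using filterlim_compose[OF assms(1)[unfolded o_pow_def] lim] by (simp add: o_def)
  then have "((\<lambda>h. c ^ m * (g (c * h) / (c * h) ^ m)) \<longlongrightarrow> c ^ m * 0) (at 0)"
    by (rule tendsto_mult_left)
  then have "((\<lambda>h. c ^ m * (g (c * h) / (c * h) ^ m)) \<longlongrightarrow> 0) (at 0)"
    by (simp only: mult_zero_right)
  then show ?thesis
    unfolding o_pow_def
    by (rule tendsto_at0_transform) (use False in \<open>simp add: power_mult_distrib\<close>)
qed

lemma conv_pow_0: "conv_pow m (\<lambda>h. 0)"
  unfolding conv_pow_def by (auto intro: tendsto_const)

lemma o_pow_imp_conv_pow: "o_pow m g \<Longrightarrow> conv_pow m g"
  unfolding o_pow_def conv_pow_def by blast

lemma conv_pow_add: "conv_pow m f \<Longrightarrow> conv_pow m g \<Longrightarrow> conv_pow m (\<lambda>h. f h + g h)"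
  unfolding conv_pow_def by (auto simp: add_divide_distrib intro: tendsto_add)

lemma conv_pow_cmult: "conv_pow m f \<Longrightarrow> conv_pow m (\<lambda>h. c * f h)"
  unfolding conv_pow_def times_divide_eq_right[symmetric] by (metis tendsto_mult_left)

lemma conv_pow_sum: "(\<And>i. i \<in> I \<Longrightarrow> conv_pow m (f i)) \<Longrightarrow> conv_pow m (\<lambda>h. \<Sum>i\<in>I. f i h)"
proof (induction I rule: infinite_finite_induct)
  case (insert x F)
  then show ?case by (simp add: conv_pow_add)
qed (auto simp: conv_pow_def)

lemma conv_pow_power:
  assumes "k \<le> i"
  shows "conv_pow k (\<lambda>h. c * h ^ i)"
proof -
  have "((\<lambda>h. c * h ^ (i - k)) \<longlongrightarrow> c * 0 ^ (i - k)) (at 0)"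
    by (intro tendsto_intros)
  then have "((\<lambda>h. c * h ^ i / h ^ k) \<longlongrightarrow> c * 0 ^ (i - k)) (at 0)"
    by (rule tendsto_at0_transform) (use assms in \<open>simp add: power_diff\<close>)
  then show ?thesis
    unfolding conv_pow_def by blast
qed

lemma conv_pow_iff_o_pow: "conv_pow m g \<longleftrightarrow> (\<exists>c. o_pow m (\<lambda>h. g h - c * h ^ m))"
proof -
  have "o_pow m (\<lambda>h. g h - c * h ^ m) \<longleftrightarrow> ((\<lambda>h. g h / h ^ m) \<longlongrightarrow> c) (at 0)" for c
  proof -
    have "o_pow m (\<lambda>h. g h - c * h ^ m) \<longleftrightarrow> ((\<lambda>h. g h / h ^ m - c) \<longlongrightarrow> 0) (at 0)"
      unfolding o_pow_def by (rule LIM_cong) (simp_all add: diff_divide_distrib)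
    then show ?thesis
      by (simp add: LIM_zero_iff)
  qed
  then show ?thesis
    unfolding conv_pow_def by blast
qed

section \<open>The dilation argument\<close>

lemma dilation_defect_telescope:
  fixes g :: "real \<Rightarrow> real"
  assumes b: "\<bar>b\<bar> \<le> 2 ^ N" and \<epsilon>: "0 \<le> \<epsilon>"
    and defect: "\<And>t. t \<noteq> 0 \<Longrightarrow> \<bar>t\<bar> < \<delta> \<Longrightarrow> \<bar>g (2 * t) - b * g t\<bar> \<le> \<epsilon> * \<bar>t\<bar> ^ Suc N"
    and h: "h \<noteq> 0" "\<bar>h\<bar> < \<delta>"
  shows "\<bar>g h - b ^ m * g (h / 2 ^ m)\<bar> \<le> \<epsilon> * \<bar>h\<bar> ^ Suc N * (1 - (1/2) ^ m)"
proof (induction m)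
  case 0
  then show ?case by simp
next
  case (Suc m)
  define t where "t = h / 2 ^ Suc m"
  have "t \<noteq> 0"
    using h by (simp add: t_def)
  have "\<bar>t\<bar> \<le> \<bar>h\<bar>"
    using one_le_power[of "2::real" "Suc m"] by (simp add: t_def abs_divide divide_le_eq mult_le_cancel_left1)
  then have "\<bar>t\<bar> < \<delta>"
    using h by linarith
  have "\<bar>b ^ m * (g (2 * t) - b * g t)\<bar> \<le> 2 ^ (N * m) * (\<epsilon> * \<bar>t\<bar> ^ Suc N)"
    unfolding abs_mult power_abs
    using power_mono[OF b, of m] defect[OF \<open>t \<noteq> 0\<close> \<open>\<bar>t\<bar> < \<delta>\<close>]
    by (intro mult_mono) (auto simp: power_mult)
  also have "\<bar>t\<bar> ^ Suc N = \<bar>h\<bar> ^ Suc N / 2 ^ (Suc m * Suc N)"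
    unfolding t_def by (simp only: abs_divide power_abs abs_numeral power_divide power_mult)
  also have "2 ^ (N * m) * (\<epsilon> * (\<bar>h\<bar> ^ Suc N / 2 ^ (Suc m * Suc N)))
      = \<epsilon> * \<bar>h\<bar> ^ Suc N * (2 ^ (N * m) / 2 ^ (Suc m * Suc N))"
    by simp
  also have "\<dots> \<le> \<epsilon> * \<bar>h\<bar> ^ Suc N * (1/2) ^ Suc m"
  proof -
    have "(2::real) ^ (N * m + Suc m) \<le> 2 ^ (Suc m * Suc N)"
      by (intro power_increasing) auto
    then have "(2::real) ^ (N * m) / 2 ^ (Suc m * Suc N) \<le> (1/2) ^ Suc m"
      by (simp add: field_simps power_add power_divide)
    then show ?thesis
      using \<epsilon> by (intro mult_left_mono) auto
  qed
  finally have step: "\<bar>b ^ m * (g (2 * t) - b * g t)\<bar> \<le> \<epsilon> * \<bar>h\<bar> ^ Suc N * (1/2) ^ Suc m" .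
  have "g h - b ^ Suc m * g (h / 2 ^ Suc m) = (g h - b ^ m * g (h / 2 ^ m)) + b ^ m * (g (2 * t) - b * g t)"
    by (simp add: t_def algebra_simps)
  then have "\<bar>g h - b ^ Suc m * g (h / 2 ^ Suc m)\<bar>
      \<le> \<epsilon> * \<bar>h\<bar> ^ Suc N * (1 - (1/2) ^ m) + \<epsilon> * \<bar>h\<bar> ^ Suc N * (1/2) ^ Suc m"
    using Suc.IH step by linarith
  also have "\<dots> = \<epsilon> * \<bar>h\<bar> ^ Suc N * (1 - (1/2) ^ Suc m)"
    by (simp add: field_simps)
  finally show ?case .
qed

text \<open>Pass from \<open>h\<close> to \<open>h / 2\<^sup>m\<close> with \<open>m\<close> so large that the a priori bound \<open>g = o(h\<^sup>N)\<close>
  takes over; the factor \<open>b\<^sup>m\<close> is harmless because \<open>|b| \<le> 2\<^sup>N\<close>.\<close>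
lemma o_pow_of_dilation_defect:
  fixes g :: "real \<Rightarrow> real"
  assumes g: "o_pow N g" and defect: "o_pow (Suc N) (\<lambda>h. g (2 * h) - b * g h)" and b: "\<bar>b\<bar> \<le> 2 ^ N"
  shows "o_pow (Suc N) g"
  unfolding o_pow_iff_bound
proof (intro allI impI)
  fix \<epsilon> :: real
  assume "\<epsilon> > 0"
  then obtain \<delta> where "\<delta> > 0"
    and \<delta>: "\<And>t. t \<noteq> 0 \<Longrightarrow> \<bar>t\<bar> < \<delta> \<Longrightarrow> \<bar>g (2 * t) - b * g t\<bar> \<le> \<epsilon> * \<bar>t\<bar> ^ Suc N"
    using defect unfolding o_pow_iff_bound by blast
  have "\<bar>g h\<bar> \<le> \<epsilon> * \<bar>h\<bar> ^ Suc N" if h: "h \<noteq> 0" "\<bar>h\<bar> < \<delta>" for h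
  proof (rule field_le_epsilon)
    fix \<eta> :: real
    assume "\<eta> > 0"
    have "\<bar>h\<bar> ^ N > 0"
      using h by simp
    then obtain \<delta>' where "\<delta>' > 0"
      and \<delta>': "\<And>t. t \<noteq> 0 \<Longrightarrow> \<bar>t\<bar> < \<delta>' \<Longrightarrow> \<bar>g t\<bar> \<le> \<eta> / \<bar>h\<bar> ^ N * \<bar>t\<bar> ^ N"
      using g \<open>\<eta> > 0\<close> unfolding o_pow_iff_bound by (meson divide_pos_pos)
    obtain m where m: "\<bar>h\<bar> / \<delta>' < 2 ^ m"
      using real_arch_pow[of 2 "\<bar>h\<bar> / \<delta>'"] by auto
    define t where "t = h / 2 ^ m"
    have "t \<noteq> 0" "\<bar>t\<bar> < \<delta>'"
      using h m \<open>\<delta>' > 0\<close> by (auto simp: t_def abs_divide field_simps)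
    have "\<bar>b ^ m * g t\<bar> \<le> 2 ^ (N * m) * (\<eta> / \<bar>h\<bar> ^ N * \<bar>t\<bar> ^ N)"
      unfolding abs_mult power_abs
      using power_mono[OF b, of m] \<delta>'[OF \<open>t \<noteq> 0\<close> \<open>\<bar>t\<bar> < \<delta>'\<close>]
      by (intro mult_mono) (auto simp: power_mult)
    also have "\<dots> = \<eta>"
      using \<open>\<bar>h\<bar> ^ N > 0\<close>
      by (simp add: t_def abs_divide power_divide power_mult[symmetric] mult.commute)
    finally have "\<bar>b ^ m * g t\<bar> \<le> \<eta>" .
    moreover have "\<bar>g h - b ^ m * g t\<bar> \<le> \<epsilon> * \<bar>h\<bar> ^ Suc N"
    proof -
      have "\<epsilon> * \<bar>h\<bar> ^ Suc N * (1 - (1/2) ^ m) \<le> \<epsilon> * \<bar>h\<bar> ^ Suc N"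
        using \<open>\<epsilon> > 0\<close> by (intro mult_left_le) auto
      then show ?thesis
        using dilation_defect_telescope[OF b _ \<delta> h, of m] \<open>\<epsilon> > 0\<close> unfolding t_def by linarith
    qed
    ultimately show "\<bar>g h\<bar> \<le> \<epsilon> * \<bar>h\<bar> ^ Suc N + \<eta>"
      by linarith
  qed
  then show "\<exists>\<delta>>0. \<forall>t. t \<noteq> 0 \<longrightarrow> \<bar>t\<bar> < \<delta> \<longrightarrow> \<bar>g t\<bar> \<le> \<epsilon> * \<bar>t\<bar> ^ Suc N"
    using \<open>\<delta> > 0\<close> by blast
qed

text \<open>Subtracting \<open>c h\<^sup>N\<^sup>+\<^sup>1\<close> with \<open>c = L / (2\<^sup>N\<^sup>+\<^sup>1 - b)\<close> makes the defect \<open>o(h\<^sup>N\<^sup>+\<^sup>1)\<close>.\<close>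
lemma conv_pow_of_dilation_defect:
  fixes g :: "real \<Rightarrow> real"
  assumes g: "o_pow N g" and defect: "conv_pow (Suc N) (\<lambda>h. g (2 * h) - b * g h)" and b: "\<bar>b\<bar> \<le> 2 ^ N"
  shows "conv_pow (Suc N) g"
proof -
  obtain L where L: "((\<lambda>h. (g (2 * h) - b * g h) / h ^ Suc N) \<longlongrightarrow> L) (at 0)"
    using defect unfolding conv_pow_def by blast
  have "(2::real) ^ N < 2 ^ Suc N"
    by simp
  then have "2 ^ Suc N - b \<noteq> 0"
    using b by linarith
  define c where "c = L / (2 ^ Suc N - b)"
  define g' where "g' h = g h - c * h ^ Suc N" for h
  have "o_pow N g'"
    unfolding g'_def using g o_pow_power[of N "Suc N" c] by (intro o_pow_diff) auto
  moreover have "o_pow (Suc N) (\<lambda>h. g' (2 * h) - b * g' h)"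
    unfolding o_pow_def
  proof (rule tendsto_at0_transform)
    show "((\<lambda>h. (g (2 * h) - b * g h) / h ^ Suc N - L) \<longlongrightarrow> 0) (at 0)"
      using L by (rule LIM_zero)
    have "c * (2 ^ Suc N - b) = L"
      unfolding c_def using \<open>2 ^ Suc N - b \<noteq> 0\<close> by simp
    moreover have "g' (2 * h) - b * g' h = (g (2 * h) - b * g h) - c * (2 ^ Suc N - b) * h ^ Suc N" for h
      unfolding g'_def by (simp add: power_mult_distrib algebra_simps)
    ultimately have "g' (2 * h) - b * g' h = (g (2 * h) - b * g h) - L * h ^ Suc N" for h
      by simp
    then show "(g (2 * h) - b * g h) / h ^ Suc N - L = (g' (2 * h) - b * g' h) / h ^ Suc N"
      if "h \<noteq> 0" for h :: real
      using that by (simp add: diff_divide_distrib)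
  qed
  ultimately have "o_pow (Suc N) g'"
    using b by (rule o_pow_of_dilation_defect)
  then show ?thesis
    unfolding conv_pow_iff_o_pow g'_def by blast
qed

lemma conv_pow_descent_step:
  fixes w :: "nat \<Rightarrow> real \<Rightarrow> real"
  assumes "K \<le> N" "K \<le> M"
    and w0: "o_pow N (w 0)"
    and steps: "\<And>j. j < M \<Longrightarrow> conv_pow (Suc N) (\<lambda>h. w (Suc j) h - w j h)"
    and double: "\<And>h. w 0 (2 * h) = (\<Sum>l\<le>K. real (K choose l) * w l h)"
    and "j \<le> M"
  shows "conv_pow (Suc N) (w j)"
proof -
  have diffs: "conv_pow (Suc N) (\<lambda>h. w j h - w 0 h)" if "j \<le> M" for j
    using that
  proof (induction j)
    case 0
    then show ?case by (simp add: conv_pow_0)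
  next
    case (Suc j)
    then have "conv_pow (Suc N) (\<lambda>h. (w (Suc j) h - w j h) + (w j h - w 0 h))"
      by (intro conv_pow_add steps) auto
    then show ?case by simp
  qed
  have "w 0 (2 * h) - 2 ^ K * w 0 h = (\<Sum>l\<le>K. real (K choose l) * (w l h - w 0 h))" for h
  proof -
    have "(2::real) ^ K = (\<Sum>l\<le>K. real (K choose l))"
      using choose_row_sum[of K] by (metis of_nat_numeral of_nat_power of_nat_sum)
    then show ?thesis
      unfolding double by (simp add: sum_distrib_right sum_subtractf right_diff_distrib)
  qed
  moreover have "conv_pow (Suc N) (\<lambda>h. \<Sum>l\<le>K. real (K choose l) * (w l h - w 0 h))"
    using \<open>K \<le> M\<close> by (intro conv_pow_sum conv_pow_cmult diffs) auto
  ultimately have "conv_pow (Suc N) (\<lambda>h. w 0 (2 * h) - 2 ^ K * w 0 h)"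
    by simp
  moreover have "\<bar>2 ^ K\<bar> \<le> (2::real) ^ N"
    using \<open>K \<le> N\<close> by (simp add: power_increasing)
  ultimately have "conv_pow (Suc N) (w 0)"
    by (rule conv_pow_of_dilation_defect[OF w0])
  with diffs[OF \<open>j \<le> M\<close>] have "conv_pow (Suc N) (\<lambda>h. (w j h - w 0 h) + w 0 h)"
    by (rule conv_pow_add)
  then show ?thesis by simp
qed

lemma o_pow_fwd_diff_dilate:
  assumes "o_pow m r" "r 0 = 0"
  shows "o_pow m (\<lambda>h. fwd_diff K (\<lambda>l. r (real l * h)) j)"
  unfolding fwd_diff_def by (intro o_pow_sum o_pow_cmult o_pow_dilate assms)

text \<open>Walk down from the \<open>(n+1)\<close>-st differences to \<open>r\<close> itself: at order \<open>K\<close> the differences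
  based at \<open>j < 2n + 1 - K\<close> are known to be \<open>C h\<^sup>n\<^sup>+\<^sup>1 + o(h\<^sup>n\<^sup>+\<^sup>1)\<close>.\<close>
lemma conv_pow_of_fwd_diffs:
  assumes "1 \<le> n" and r: "o_pow n r" "r 0 = 0"
    and top: "\<And>j. j < n \<Longrightarrow> conv_pow (Suc n) (\<lambda>h. fwd_diff (Suc n) (\<lambda>m. r (real m * h)) j)"
  shows "conv_pow (Suc n) r"
proof -
  define G where "G = (\<lambda>K j h. fwd_diff K (\<lambda>m. r (real m * h)) j)"
  have descent: "conv_pow (Suc n) (G (Suc n - d) j)" if "d \<le> n" "j < n + d" for d j
    using that
  proof (induction d arbitrary: j)
    case 0
    then have "j < n"
      by simp
    then show ?case
      unfolding G_def diff_zero by (rule top)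
  next
    case (Suc d)
    define K where "K = n - d"
    have K: "Suc n - Suc d = K" "Suc n - d = Suc K" "K \<le> n" "K \<le> n + d"
      using Suc.prems by (auto simp: K_def)
    have "o_pow n (G K 0)"
      unfolding G_def by (rule o_pow_fwd_diff_dilate[OF r])
    moreover have "conv_pow (Suc n) (\<lambda>h. G K (Suc j) h - G K j h)" if "j < n + d" for j
    proof -
      have "conv_pow (Suc n) (G (Suc K) j)"
        using Suc.IH[of j] Suc.prems that K(2) by simp
      moreover have "G (Suc K) j = (\<lambda>h. G K (Suc j) h - G K j h)"
        by (simp add: G_def fwd_diff_Suc)
      ultimately show ?thesis
        by simp
    qed
    moreover have "G K 0 (2 * h) = (\<Sum>l\<le>K. real (K choose l) * G K l h)" for h
    proof -
      have "(\<lambda>m. r (real m * (2 * h))) = (\<lambda>i. r (real (2 * i) * h))"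
        by (simp add: fun_eq_iff mult.commute mult.left_commute)
      then have "G K 0 (2 * h) = fwd_diff K (\<lambda>i. r (real (2 * i) * h)) 0"
        by (simp only: G_def)
      also have "\<dots> = (\<Sum>l\<le>K. real (K choose l) * fwd_diff K (\<lambda>m. r (real m * h)) l)"
        by (rule fwd_diff_double_step[of K "\<lambda>m. r (real m * h)"])
      finally show ?thesis
        by (simp add: G_def)
    qed
    moreover have "j \<le> n + d"
      using Suc.prems by simp
    ultimately show ?case
      unfolding K(1) by (rule conv_pow_descent_step[OF K(3) K(4)])
  qed
  have "conv_pow (Suc n) (G 1 0)"
    using descent[of n 0] \<open>1 \<le> n\<close> by simp
  moreover have "G 1 0 = r"
    by (simp add: G_def fwd_diff_def r(2) fun_eq_iff)
  ultimately show ?thesis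
    by simp
qed

section \<open>Peano derivatives\<close>

lemma peano_differentiable_iff_o_pow:
  "peano_differentiable n f x \<longleftrightarrow>
     (\<exists>a. a 0 = f x \<and> o_pow n (\<lambda>h. f (x + h) - (\<Sum>i\<le>n. a i * h ^ i / fact i)))"
  by (simp add: peano_differentiable_def o_pow_def)

lemma taylor_sum_at_0: "(\<Sum>i\<le>n. a i * (0::real) ^ i / fact i) = a 0"
  by (induction n) auto

lemma peano_differentiable_mono:
  assumes "peano_differentiable n f x" "m \<le> n"
  shows "peano_differentiable m f x"
proof -
  obtain a where "a 0 = f x" and R: "o_pow n (\<lambda>h. f (x + h) - (\<Sum>i\<le>n. a i * h ^ i / fact i))"
    using assms(1) by (auto simp: peano_differentiable_iff_o_pow)
  have "o_pow m (\<lambda>h. (f (x + h) - (\<Sum>i\<le>n. a i * h ^ i / fact i)) + (\<Sum>i\<in>{m<..n}. a i / fact i * h ^ i))"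
    using o_pow_mono[OF R assms(2)] by (intro o_pow_add o_pow_sum o_pow_power) auto
  moreover have "(\<Sum>i\<le>n. a i * h ^ i / fact i) =
      (\<Sum>i\<le>m. a i * h ^ i / fact i) + (\<Sum>i\<in>{m<..n}. a i / fact i * h ^ i)" for h
  proof -
    have "{..n} = {..m} \<union> {m<..n}"
      using assms(2) by auto
    then have "(\<Sum>i\<le>n. a i * h ^ i / fact i) =
        (\<Sum>i\<le>m. a i * h ^ i / fact i) + (\<Sum>i\<in>{m<..n}. a i * h ^ i / fact i)"
      by (simp only:) (rule sum.union_disjoint; auto)
    then show ?thesis
      by simp
  qed
  ultimately show ?thesis
    using \<open>a 0 = f x\<close> unfolding peano_differentiable_iff_o_pow by auto
qed

lemma peano_differentiable_1_iff:
  "peano_differentiable 1 f x \<longleftrightarrow> (\<exists>D. (f has_real_derivative D) (at x))"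
proof -
  have key: "((\<lambda>h. (f (x + h) - (\<Sum>i\<le>1. a i * h ^ i / fact i)) / h ^ 1) \<longlongrightarrow> 0) (at 0)
      \<longleftrightarrow> ((\<lambda>h. (f (x + h) - f x) / h) \<longlongrightarrow> a 1) (at 0)" if "a 0 = f x" for a
  proof -
    have "((\<lambda>h. (f (x + h) - (\<Sum>i\<le>1. a i * h ^ i / fact i)) / h ^ 1) \<longlongrightarrow> 0) (at 0)
        \<longleftrightarrow> ((\<lambda>h. (f (x + h) - f x) / h - a 1) \<longlongrightarrow> 0) (at 0)"
      by (rule LIM_cong) (use that in \<open>simp_all add: field_simps\<close>)
    then show ?thesis
      by (simp add: LIM_zero_iff)
  qed
  show ?thesis
    unfolding peano_differentiable_def DERIV_def
  proof (intro iffI)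
    assume "\<exists>D. ((\<lambda>h. (f (x + h) - f x) / h) \<longlongrightarrow> D) (at 0)"
    then obtain D where "((\<lambda>h. (f (x + h) - f x) / h) \<longlongrightarrow> D) (at 0)"
      by blast
    with key[of "\<lambda>i. if i = 0 then f x else D"] show "\<exists>a. a 0 = f x \<and>
        ((\<lambda>h. (f (x + h) - (\<Sum>i\<le>1. a i * h ^ i / fact i)) / h ^ 1) \<longlongrightarrow> 0) (at 0)"
      by (intro exI[of _ "\<lambda>i. if i = 0 then f x else D"]) simp
  qed (use key in blast)
qed

lemma fwd_diff_taylor_split:
  assumes "\<And>t. f (x + t) = R t + (\<Sum>i\<le>n. a i * t ^ i / fact i)"
  shows "fwd_diff K (\<lambda>m. f (x + real m * h)) j =
    fwd_diff K (\<lambda>m. R (real m * h)) j + (\<Sum>i\<le>n. a i * h ^ i / fact i * fwd_diff K (\<lambda>m. real m ^ i) j)"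
  by (simp only: assms fwd_diff_add fwd_diff_scaled_poly)

lemma peano_differentiable_imp_D_exists:
  assumes "peano_differentiable n f x" "k \<le> n"
  shows "D_exists k j f x"
proof -
  obtain a where "a 0 = f x" and R: "o_pow n (\<lambda>h. f (x + h) - (\<Sum>i\<le>n. a i * h ^ i / fact i))"
    using assms(1) by (auto simp: peano_differentiable_iff_o_pow)
  define r where "r t = f (x + t) - (\<Sum>i\<le>n. a i * t ^ i / fact i)" for t
  have "r 0 = 0"
    using \<open>a 0 = f x\<close> by (simp add: r_def taylor_sum_at_0)
  have poly: "conv_pow k (\<lambda>h. a i * h ^ i / fact i * fwd_diff k (\<lambda>m. real m ^ i) j)" for i
  proof (cases "i < k")
    case True
    then show ?thesis by (simp add: fwd_diff_power_eq_0 conv_pow_0)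
  next
    case False
    then have "conv_pow k (\<lambda>h. (a i / fact i * fwd_diff k (\<lambda>m. real m ^ i) j) * h ^ i)"
      by (intro conv_pow_power) simp
    then show ?thesis
      by (simp add: mult_ac)
  qed
  have "conv_pow k (\<lambda>h. fwd_diff k (\<lambda>m. r (real m * h)) j +
      (\<Sum>i\<le>n. a i * h ^ i / fact i * fwd_diff k (\<lambda>m. real m ^ i) j))"
    using o_pow_mono[OF R[folded r_def] assms(2)] \<open>r 0 = 0\<close>
    by (intro conv_pow_add conv_pow_sum o_pow_imp_conv_pow o_pow_fwd_diff_dilate poly)
  then have "conv_pow k (\<lambda>h. fwd_diff k (\<lambda>m. f (x + real m * h)) j)"
    by (subst fwd_diff_taylor_split[where R=r]) (simp_all add: r_def)
  then show ?thesis
    unfolding D_exists_def conv_pow_def diff_quot_eq_fwd_diff .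
qed

lemma peano_differentiable_Suc:
  assumes "1 \<le> n" "peano_differentiable n f x" and D: "\<And>j. j < n \<Longrightarrow> D_exists (Suc n) j f x"
  shows "peano_differentiable (Suc n) f x"
proof -
  obtain a where "a 0 = f x" and R: "o_pow n (\<lambda>h. f (x + h) - (\<Sum>i\<le>n. a i * h ^ i / fact i))"
    using assms(2) by (auto simp: peano_differentiable_iff_o_pow)
  define r where "r t = f (x + t) - (\<Sum>i\<le>n. a i * t ^ i / fact i)" for t
  have "r 0 = 0"
    using \<open>a 0 = f x\<close> by (simp add: r_def taylor_sum_at_0)
  have "conv_pow (Suc n) (\<lambda>h. fwd_diff (Suc n) (\<lambda>m. r (real m * h)) j)" if "j < n" for j
  proof -
    have "(\<Sum>i\<le>n. a i * h ^ i / fact i * fwd_diff (Suc n) (\<lambda>m. real m ^ i) j) = 0" for h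
      by (intro sum.neutral ballI) (simp add: fwd_diff_power_eq_0)
    then have "fwd_diff (Suc n) (\<lambda>m. f (x + real m * h)) j = fwd_diff (Suc n) (\<lambda>m. r (real m * h)) j" for h
      using fwd_diff_taylor_split[where R=r and K="Suc n" and n=n and a=a and h=h and j=j]
      by (simp add: r_def)
    then show ?thesis
      using D[OF that] unfolding D_exists_def conv_pow_def diff_quot_eq_fwd_diff by simp
  qed
  then have "conv_pow (Suc n) r"
    using conv_pow_of_fwd_diffs[OF \<open>1 \<le> n\<close> R[folded r_def] \<open>r 0 = 0\<close>] by blast
  then obtain c where c: "o_pow (Suc n) (\<lambda>h. r h - c * h ^ Suc n)"
    unfolding conv_pow_iff_o_pow by blast
  define a' where "a' = a(Suc n := c * fact (Suc n))"
  have eq: "(\<lambda>h. r h - c * h ^ Suc n) = (\<lambda>h. f (x + h) - (\<Sum>i\<le>Suc n. a' i * h ^ i / fact i))"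
    by (simp add: r_def a'_def fun_eq_iff)
  have "o_pow (Suc n) (\<lambda>h. f (x + h) - (\<Sum>i\<le>Suc n. a' i * h ^ i / fact i))"
    using c unfolding eq .
  moreover have "a' 0 = f x"
    using \<open>a 0 = f x\<close> by (simp add: a'_def)
  ultimately show ?thesis
    unfolding peano_differentiable_iff_o_pow by blast
qed

lemma peano_differentiable_of_D_exists:
  assumes "(f has_real_derivative D) (at x)"
    and "\<And>k j. 2 \<le> k \<Longrightarrow> k \<le> n \<Longrightarrow> j \<le> k - 2 \<Longrightarrow> D_exists k j f x"
  shows "peano_differentiable n f x"
  using assms(2)
proof (induction n)
  case 0
  then show ?case
    using assms(1) peano_differentiable_1_iff peano_differentiable_mono by blast
next
  case (Suc n)
  show ?case
  proof (cases "n = 0")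
    case True
    then show ?thesis
      using assms(1) peano_differentiable_1_iff by auto
  next
    case False
    then show ?thesis
      using Suc by (intro peano_differentiable_Suc) auto
  qed
qed

theorem corollary2:
  fixes n :: nat and f :: "real \<Rightarrow> real" and x :: real
  assumes "n \<ge> 2"
    and "f \<in> borel_measurable lebesgue"
  shows "((\<exists>D. (f has_real_derivative D) (at x)) \<and>
           (\<forall>k\<in>{2..n}. \<forall>j\<in>{0..k-2}. D_exists k j f x))
         \<longleftrightarrow> peano_differentiable n f x"
proof
  assume "(\<exists>D. (f has_real_derivative D) (at x)) \<and> (\<forall>k\<in>{2..n}. \<forall>j\<in>{0..k-2}. D_exists k j f x)"
  then obtain D where "(f has_real_derivative D) (at x)" and "\<forall>k\<in>{2..n}. \<forall>j\<in>{0..k-2}. D_exists k j f x"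
    by blast
  then show "peano_differentiable n f x"
    by (intro peano_differentiable_of_D_exists) auto
next
  assume P: "peano_differentiable n f x"
  have "\<exists>D. (f has_real_derivative D) (at x)"
    using peano_differentiable_mono[OF P, of 1] \<open>n \<ge> 2\<close> peano_differentiable_1_iff by simp
  moreover have "\<forall>k\<in>{2..n}. \<forall>j\<in>{0..k-2}. D_exists k j f x"
    using peano_differentiable_imp_D_exists[OF P] by simp
  ultimately show "(\<exists>D. (f has_real_derivative D) (at x)) \<and> (\<forall>k\<in>{2..n}. \<forall>j\<in>{0..k-2}. D_exists k j f x)"
    by blast
qed

end
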